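(* Let $n\ge 2$ and let $D$ be any $n$-qubit $\textsc{CZ}$-layer. Let $R$ denote the complete qubit reversal $|x_1x_2\cdots x_n\rangle\mapsto|x_nx_{n-1}\cdots x_1\rangle$. Then the unitary $R\,D$ (a $\textsc{CZ}$-layer followed by qubit reversal; denoted $\widehat{\text{-CZ-}}$) can be implemented by a circuit over the gate library $\{\textsc{P},\textsc{P}^\dagger,\textsc{Z},\textsc{CNOT}\}$ in which every $\textsc{CNOT}$ acts on two adjacent qubits of the line $1,2,\dots,n$ (linear nearest neighbour architecture) and whose $\textsc{CNOT}$ depth (two-qubit depth) is at most $2n+2$.
   Context: $\textsc{P}=\mathrm{diag}(1,i)$, $\textsc{Z}=\textsc{P}^2$, $\textsc{CNOT}|a,b\rangle=|a,a\oplus b\rangle$, $\textsc{CZ}|a,b\rangle=(-1)^{ab}|a,b\rangle$. A $\textsc{CZ}$-layer is any product of $\textsc{CZ}$ gates on pairs of the $n$ qubits. Linear nearest neighbour (LNN) architecture: qubits are arranged on a line and two-qubit gates may only act on qubits $j,j+1$. The two-qubit depth of a circuit is the minimum number of time steps needed to execute its two-qubit gates when each step consists of two-qubit gates on pairwise disjoint qubits (single-qubit gates are not counted). *)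

theory Defs
  imports Complex_Main
begin

text \<open>Computational basis states of n qubits (qubits 0..n-1 on a line) are
  bit assignments x :: nat => bool that are False outside {0..<n}.
  Operators on the n-qubit space are given by their matrix entries
  M y x = <y| M |x> over this finite basis.\<close>

definition basis :: "nat \<Rightarrow> (nat \<Rightarrow> bool) set" where
  "basis n = {x. \<forall>i\<ge>n. \<not> x i}"

type_synonym qmat = "(nat \<Rightarrow> bool) \<Rightarrow> (nat \<Rightarrow> bool) \<Rightarrow> complex"

definition qmult :: "nat \<Rightarrow> qmat \<Rightarrow> qmat \<Rightarrow> qmat" where
  "qmult n A B = (\<lambda>y x. \<Sum>z\<in>basis n. A y z * B z x)"

definition qid :: qmat where
  "qid = (\<lambda>y x. if y = x then 1 else 0)"

datatype gate = Pg nat | Pdg nat | Zg nat | CNOT nat nat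

fun gate_mat :: "gate \<Rightarrow> qmat" where
  "gate_mat (Pg q) = (\<lambda>y x. if y = x then (if x q then \<i> else 1) else 0)"
| "gate_mat (Pdg q) = (\<lambda>y x. if y = x then (if x q then - \<i> else 1) else 0)"
| "gate_mat (Zg q) = (\<lambda>y x. if y = x then (if x q then -1 else 1) else 0)"
| "gate_mat (CNOT c t) = (\<lambda>y x. if y = x(t := (x t \<noteq> x c)) then 1 else 0)"

text \<open>A gate sequence is applied left to right: its operator is G_m ... G_1.\<close>
fun circ_mat :: "nat \<Rightarrow> gate list \<Rightarrow> qmat" where
  "circ_mat n [] = qid"
| "circ_mat n (g # gs) = qmult n (circ_mat n gs) (gate_mat g)"

fun lnn_gate :: "nat \<Rightarrow> gate \<Rightarrow> bool" where
  "lnn_gate n (Pg q) = (q < n)"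
| "lnn_gate n (Pdg q) = (q < n)"
| "lnn_gate n (Zg q) = (q < n)"
| "lnn_gate n (CNOT c t) = (c < n \<and> t < n \<and> (t = c + 1 \<or> c = t + 1))"

fun gate_qubits :: "gate \<Rightarrow> nat set" where
  "gate_qubits (Pg q) = {q}"
| "gate_qubits (Pdg q) = {q}"
| "gate_qubits (Zg q) = {q}"
| "gate_qubits (CNOT c t) = {c, t}"

fun is_cnot :: "gate \<Rightarrow> bool" where
  "is_cnot (CNOT c t) = True"
| "is_cnot _ = False"

text \<open>A time step (layer): a gate sequence whose two-qubit gates act on pairwise
  disjoint qubits (single-qubit gates are free).\<close>
definition cnot_layer :: "gate list \<Rightarrow> bool" where
  "cnot_layer gs = (\<forall>i<length gs. \<forall>j<length gs. i \<noteq> j \<longrightarrow> is_cnot (gs ! i) \<longrightarrow>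
      is_cnot (gs ! j) \<longrightarrow> gate_qubits (gs ! i) \<inter> gate_qubits (gs ! j) = {})"

definition lnn_circuit_depth_le :: "nat \<Rightarrow> nat \<Rightarrow> gate list list \<Rightarrow> bool" where
  "lnn_circuit_depth_le n d L = (length L \<le> d \<and> (\<forall>l\<in>set L. cnot_layer l \<and>
      (\<forall>g\<in>set l. lnn_gate n g)))"

definition cz_mat :: "nat \<Rightarrow> nat \<Rightarrow> qmat" where
  "cz_mat j k = (\<lambda>y x. if y = x then (if x j \<and> x k then -1 else 1) else 0)"

fun cz_layer_mat :: "nat \<Rightarrow> (nat \<times> nat) list \<Rightarrow> qmat" where
  "cz_layer_mat n [] = qid"
| "cz_layer_mat n ((j, k) # ps) = qmult n (cz_layer_mat n ps) (cz_mat j k)"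

definition rev_mat :: "nat \<Rightarrow> qmat" where
  "rev_mat n = (\<lambda>y x. if y = (\<lambda>i. if i < n then x (n - 1 - i) else False) then 1 else 0)"

end

theory Submission
  imports Defs
begin

text \<open>
  Write s(0), ..., s(n) for the prefix parities of a basis state x, so that x(i) = s(i) xor s(i+1).
  The circuit keeps qubit i in the state s(\<sigma> i) xor s(\<sigma> (i+1)) for a permutation \<sigma> of the
  n + 1 wires 0, ..., n, and each of its n + 1 rounds of two CNOT layers performs one round of
  odd-even transposition sort on \<sigma>. After n + 1 rounds \<sigma> is the reversal, so the bits are
  reversed. Every pair of wires a < b is adjacent at some point, and a gate P^k on the qubit
  between them then contributes the phase i^(k [s(a) \<noteq> s(b)]). Modulo 4, 2 x(j) x(k) is an
  integer combination of four such indicators, so suitable exponents reproduce the CZ layer.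
\<close>

section \<open>Circuits act monomially on basis states\<close>

fun gate_step :: "gate \<Rightarrow> (nat \<Rightarrow> bool) \<Rightarrow> (nat \<Rightarrow> bool)" where
  "gate_step (CNOT c t) x = x(t := (x t \<noteq> x c))"
| "gate_step (Pg q) x = x"
| "gate_step (Pdg q) x = x"
| "gate_step (Zg q) x = x"

fun gate_phase :: "gate \<Rightarrow> (nat \<Rightarrow> bool) \<Rightarrow> complex" where
  "gate_phase (Pg q) x = (if x q then \<i> else 1)"
| "gate_phase (Pdg q) x = (if x q then - \<i> else 1)"
| "gate_phase (Zg q) x = (if x q then -1 else 1)"
| "gate_phase (CNOT c t) x = 1"

lemma gate_mat_eq_monomial: "gate_mat g y x = (if y = gate_step g x then gate_phase g x else 0)"
  by (cases g) auto

fun circ_run :: "gate list \<Rightarrow> (nat \<Rightarrow> bool) \<Rightarrow> (nat \<Rightarrow> bool)" where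
  "circ_run [] x = x"
| "circ_run (g # gs) x = circ_run gs (gate_step g x)"

fun circ_phase :: "gate list \<Rightarrow> (nat \<Rightarrow> bool) \<Rightarrow> complex" where
  "circ_phase [] x = 1"
| "circ_phase (g # gs) x = gate_phase g x * circ_phase gs (gate_step g x)"

lemma circ_run_append [simp]: "circ_run (gs @ hs) x = circ_run hs (circ_run gs x)"
  by (induction gs arbitrary: x) auto

lemma circ_phase_append [simp]:
  "circ_phase (gs @ hs) x = circ_phase gs x * circ_phase hs (circ_run gs x)"
  by (induction gs arbitrary: x) auto

lemma finite_basis: "finite (basis n)"
proof (rule finite_subset)
  show "basis n \<subseteq> (\<lambda>S i. i \<in> S) ` Pow {..<n}"
  proof
    fix x assume "x \<in> basis n"
    then have "{i. x i} \<in> Pow {..<n}" by (auto simp: basis_def not_le[symmetric])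
    moreover have "x = (\<lambda>i. i \<in> {i. x i})" by simp
    ultimately show "x \<in> (\<lambda>S i. i \<in> S) ` Pow {..<n}" by blast
  qed
qed simp

lemma sum_basis_delta:
  fixes f :: "(nat \<Rightarrow> bool) \<Rightarrow> 'a :: semiring_0"
  assumes "w \<in> basis n"
  shows "(\<Sum>z\<in>basis n. f z * (if z = w then c else 0)) = f w * c"
proof -
  have "(\<Sum>z\<in>basis n. f z * (if z = w then c else 0)) = (\<Sum>z\<in>basis n. if z = w then f w * c else 0)"
    by (rule sum.cong) auto
  also have "\<dots> = f w * c" using assms finite_basis by (simp add: sum.delta')
  finally show ?thesis .
qed

lemma gate_step_basis: "lnn_gate n g \<Longrightarrow> x \<in> basis n \<Longrightarrow> gate_step g x \<in> basis n"
  by (cases g) (auto simp: basis_def)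

lemma circ_mat_eq_monomial:
  assumes "\<forall>g\<in>set gs. lnn_gate n g" and "x \<in> basis n"
  shows "circ_mat n gs y x = (if y = circ_run gs x then circ_phase gs x else 0)"
  using assms
proof (induction gs arbitrary: x)
  case Nil
  then show ?case by (simp add: qid_def)
next
  case (Cons g gs)
  have step: "gate_step g x \<in> basis n" using Cons.prems gate_step_basis by simp
  have "circ_mat n (g # gs) y x = circ_mat n gs y (gate_step g x) * gate_phase g x"
    unfolding circ_mat.simps qmult_def gate_mat_eq_monomial by (rule sum_basis_delta[OF step])
  then show ?case using Cons.IH[OF _ step] Cons.prems by (simp add: mult.commute)
qed

fun cz_phase :: "(nat \<times> nat) list \<Rightarrow> (nat \<Rightarrow> bool) \<Rightarrow> complex" where
  "cz_phase [] x = 1"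
| "cz_phase ((j, k) # ps) x = cz_phase ps x * (if x j \<and> x k then -1 else 1)"

lemma cz_layer_mat_eq_diagonal:
  "x \<in> basis n \<Longrightarrow> cz_layer_mat n ps y x = (if y = x then cz_phase ps x else 0)"
proof (induction ps arbitrary: y)
  case Nil
  then show ?case by (simp add: qid_def)
next
  case (Cons e ps)
  obtain j k where e: "e = (j, k)" by fastforce
  have "cz_layer_mat n (e # ps) y x = cz_layer_mat n ps y x * (if x j \<and> x k then -1 else 1)"
    unfolding e cz_layer_mat.simps qmult_def cz_mat_def by (rule sum_basis_delta[OF Cons.prems])
  then show ?case using Cons by (simp add: e)
qed

definition rev_bits :: "nat \<Rightarrow> (nat \<Rightarrow> bool) \<Rightarrow> (nat \<Rightarrow> bool)" where
  "rev_bits n x = (\<lambda>i. if i < n then x (n - 1 - i) else False)"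

lemma rev_cz_layer_mat_eq_monomial:
  assumes "x \<in> basis n"
  shows "qmult n (rev_mat n) (cz_layer_mat n ps) y x = (if y = rev_bits n x then cz_phase ps x else 0)"
proof -
  have "qmult n (rev_mat n) (cz_layer_mat n ps) y x = rev_mat n y x * cz_phase ps x"
    unfolding qmult_def cz_layer_mat_eq_diagonal[OF assms] by (rule sum_basis_delta[OF assms])
  then show ?thesis by (simp add: rev_mat_def rev_bits_def)
qed

definition ipow :: "int \<Rightarrow> complex" where
  "ipow k = \<i> ^ nat (k mod 4)"

lemma i_power_mod_4: "\<i> ^ m = \<i> ^ (m mod 4)"
proof -
  have "\<i> ^ m = \<i> ^ (4 * (m div 4) + m mod 4)" by simp
  also have "\<dots> = (\<i> ^ 4) ^ (m div 4) * \<i> ^ (m mod 4)" by (simp only: power_add power_mult)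
  finally show ?thesis by simp
qed

lemma ipow_add: "ipow (a + b) = ipow a * ipow b"
proof -
  have "ipow a * ipow b = \<i> ^ (nat (a mod 4) + nat (b mod 4))"
    by (simp add: ipow_def power_add)
  also have "\<dots> = \<i> ^ ((nat (a mod 4) + nat (b mod 4)) mod 4)"
    by (rule i_power_mod_4)
  also have "(nat (a mod 4) + nat (b mod 4)) mod 4 = nat ((a mod 4 + b mod 4) mod 4)"
    by (simp add: nat_add_distrib nat_mod_distrib)
  also have "\<dots> = nat ((a + b) mod 4)"
    by (simp add: mod_add_eq)
  finally show ?thesis by (simp add: ipow_def)
qed

lemma ipow_0 [simp]: "ipow 0 = 1"
  by (simp add: ipow_def)

lemma prod_list_ipow: "(\<Prod>c\<leftarrow>cs. ipow (f c)) = ipow (\<Sum>c\<leftarrow>cs. f c)"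
  by (induction cs) (simp_all add: ipow_add)

lemma power_if_i_eq_ipow: "(if b then \<i> else 1) ^ nat (k mod 4) = ipow (k * of_bool b)"
  by (simp add: ipow_def)

section \<open>Odd-even transposition sort\<close>

definition oe_swap :: "nat \<Rightarrow> nat \<Rightarrow> nat \<Rightarrow> nat" where
  "oe_swap n r p =
    (if p \<le> n then
       if odd (p + r) then (if p < n then Suc p else p) else (if 0 < p then p - 1 else p)
     else p)"

(* oe_perm n r p is the wire sitting at position p after r rounds. *)
fun oe_perm :: "nat \<Rightarrow> nat \<Rightarrow> nat \<Rightarrow> nat" where
  "oe_perm n 0 p = p"
| "oe_perm n (Suc r) p = oe_perm n r (oe_swap n r p)"

definition swap_positions :: "nat \<Rightarrow> nat \<Rightarrow> nat set" where
  "swap_positions n r = {p. p < n \<and> odd (p + r)}"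

lemma oe_swap_le: "p \<le> n \<Longrightarrow> oe_swap n r p \<le> n"
  unfolding oe_swap_def by auto

lemma oe_swap_oe_swap [simp]: "oe_swap n r (oe_swap n r p) = p"
  unfolding oe_swap_def by (cases p) auto

lemma oe_swap_swap_position:
  "p \<in> swap_positions n r \<Longrightarrow> oe_swap n r p = Suc p \<and> oe_swap n r (Suc p) = p"
  unfolding swap_positions_def oe_swap_def by auto

lemma oe_swap_eq_self:
  assumes "p \<notin> swap_positions n r" and "p \<notin> Suc ` swap_positions n r"
  shows "oe_swap n r p = p"
  using assms unfolding swap_positions_def oe_swap_def by (cases p) auto

lemma bij_betw_oe_swap: "bij_betw (oe_swap n r) {..n} {..n}"
  by (rule bij_betw_byWitness[where f'="oe_swap n r"]) (auto simp: oe_swap_le)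

lemma oe_perm_Suc: "oe_perm n (Suc r) = oe_perm n r \<circ> oe_swap n r"
  by auto

lemma bij_betw_oe_perm: "bij_betw (oe_perm n r) {..n} {..n}"
proof (induction r)
  case 0
  then show ?case by (simp add: bij_betw_def)
next
  case (Suc r)
  then show ?case unfolding oe_perm_Suc by (rule bij_betw_trans[OF bij_betw_oe_swap])
qed

lemma oe_swap_less_iff:
  assumes "p \<le> n" and "q \<le> n"
  shows "oe_swap n r p < oe_swap n r q \<longleftrightarrow>
    (if q = oe_swap n r p \<and> q \<noteq> p then q < p else p < q)"
  using assms unfolding oe_swap_def by (auto split: if_splits; presburger)

(* Each wire moves one step per round and is reflected at both ends of {..n}: unfolded, its
   trajectory is a rotation of a cycle of length 2(n + 1). *)
definition fold_cycle :: "nat \<Rightarrow> nat \<Rightarrow> nat" where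
  "fold_cycle n u = (if u \<le> n then u else 2 * n + 1 - u)"

definition cycle_start :: "nat \<Rightarrow> nat \<Rightarrow> nat" where
  "cycle_start n j = (if odd j then j else 2 * n + 1 - j)"

definition trajectory :: "nat \<Rightarrow> nat \<Rightarrow> nat \<Rightarrow> nat" where
  "trajectory n r j = fold_cycle n ((cycle_start n j + r) mod (2 * (n + 1)))"

lemma fold_cycle_Suc:
  assumes "u < 2 * (n + 1)" and "odd u \<longleftrightarrow> even r"
  shows "fold_cycle n (Suc u mod (2 * (n + 1))) = oe_swap n r (fold_cycle n u)"
proof -
  consider "u \<le> n" | "n < u" "Suc u < 2 * (n + 1)" | "Suc u = 2 * (n + 1)"
    using assms(1) by linarith
  then show ?thesis
  proof cases
    case 1
    moreover have "odd (u + r)" using assms(2) by presburger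
    ultimately show ?thesis by (auto simp: fold_cycle_def oe_swap_def)
  next
    case 2
    moreover have "even (2 * n + 1 - u + r)" using 2 assms(2) by presburger
    ultimately show ?thesis by (simp add: fold_cycle_def oe_swap_def)
  next
    case 3
    moreover have "even r" using 3 assms(2) by presburger
    ultimately show ?thesis by (simp add: fold_cycle_def oe_swap_def)
  qed
qed

lemma trajectory_Suc:
  assumes "j \<le> n"
  shows "trajectory n (Suc r) j = oe_swap n r (trajectory n r j)"
proof -
  let ?u = "(cycle_start n j + r) mod (2 * (n + 1))"
  have "odd (cycle_start n j)" using assms unfolding cycle_start_def by auto
  moreover have "odd ?u \<longleftrightarrow> odd (cycle_start n j + r)"
    using dvd_mod_iff[of 2 "2 * (n + 1)"] by simp
  ultimately have "odd ?u \<longleftrightarrow> even r" by simp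
  then show ?thesis
    unfolding trajectory_def using fold_cycle_Suc[of ?u n r] by (simp add: mod_Suc_eq)
qed

lemma oe_perm_trajectory: "j \<le> n \<Longrightarrow> oe_perm n r (trajectory n r j) = j"
proof (induction r)
  case 0
  then show ?case by (auto simp: trajectory_def cycle_start_def fold_cycle_def)
next
  case (Suc r)
  then show ?case by (simp add: trajectory_Suc)
qed

lemma trajectory_reverses:
  assumes "j \<le> n"
  shows "trajectory n (Suc n) j = n - j"
proof (cases "odd j")
  case True
  then have "(cycle_start n j + Suc n) mod (2 * (n + 1)) = j + Suc n"
    using assms by (simp add: cycle_start_def)
  then show ?thesis by (simp add: trajectory_def fold_cycle_def)
next
  case False
  then have "cycle_start n j + Suc n = (n - j) + 2 * (n + 1)"
    using assms by (simp add: cycle_start_def)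
  then have "(cycle_start n j + Suc n) mod (2 * (n + 1)) = n - j"
    by (simp only: mod_add_self2) simp
  then show ?thesis by (simp add: trajectory_def fold_cycle_def)
qed

lemma oe_perm_reverses: "p \<le> n \<Longrightarrow> oe_perm n (Suc n) p = n - p"
  using oe_perm_trajectory[of "n - p" n "Suc n"] trajectory_reverses[of "n - p" n] by simp

section \<open>Inversion weights\<close>

definition inversion_weight :: "nat \<Rightarrow> (nat \<Rightarrow> nat \<Rightarrow> int) \<Rightarrow> (nat \<Rightarrow> nat) \<Rightarrow> int" where
  "inversion_weight n W \<sigma> =
    (\<Sum>p\<le>n. \<Sum>q\<le>n. if p < q \<and> \<sigma> q < \<sigma> p then W (\<sigma> q) (\<sigma> p) else 0)"

(* Swaps that remove an inversion contribute with a negative sign; this saves proving that the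
   sort only ever creates inversions. *)
definition oriented :: "(nat \<Rightarrow> nat \<Rightarrow> int) \<Rightarrow> nat \<Rightarrow> nat \<Rightarrow> int" where
  "oriented W a b = (if a < b then W a b else - W b a)"

lemma sum_atMost_oe_swap_reindex: "(\<Sum>p\<le>n. g (oe_swap n r p)) = (\<Sum>p\<le>n. g p)"
  using sum.reindex_bij_betw[OF bij_betw_oe_swap, of g] by simp

lemma sum_atMost_swap_positions:
  fixes D :: "nat \<Rightarrow> 'a :: comm_monoid_add"
  assumes "\<And>p. p \<le> n \<Longrightarrow> oe_swap n r p = p \<Longrightarrow> D p = 0"
  shows "(\<Sum>p\<le>n. D p) = (\<Sum>p\<in>swap_positions n r. D p + D (Suc p))"
proof -
  let ?S = "swap_positions n r"
  have "(\<Sum>p\<le>n. D p) = (\<Sum>p\<in>?S \<union> Suc ` ?S. D p)"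
  proof (rule sum.mono_neutral_right)
    show "?S \<union> Suc ` ?S \<subseteq> {..n}" by (auto simp: swap_positions_def)
    show "\<forall>p\<in>{..n} - (?S \<union> Suc ` ?S). D p = 0" using assms oe_swap_eq_self by blast
  qed simp
  also have "\<dots> = (\<Sum>p\<in>?S. D p) + (\<Sum>p\<in>?S. D (Suc p))"
    by (subst sum.union_disjoint) (auto simp: swap_positions_def sum.reindex)
  finally show ?thesis by (simp add: sum.distrib)
qed

lemma inversion_weight_comp_oe_swap:
  "inversion_weight n W (\<sigma> \<circ> oe_swap n r) =
    (\<Sum>p\<le>n. \<Sum>q\<le>n. if oe_swap n r p < oe_swap n r q \<and> \<sigma> q < \<sigma> p then W (\<sigma> q) (\<sigma> p) else 0)"
  (is "_ = (\<Sum>p\<le>n. \<Sum>q\<le>n. ?F p q)")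
proof -
  have "inversion_weight n W (\<sigma> \<circ> oe_swap n r) = (\<Sum>p\<le>n. \<Sum>q\<le>n. ?F (oe_swap n r p) (oe_swap n r q))"
    unfolding inversion_weight_def comp_def by simp
  also have "\<dots> = (\<Sum>p\<le>n. \<Sum>q\<le>n. ?F (oe_swap n r p) q)"
    by (rule sum.cong[OF refl]) (rule sum_atMost_oe_swap_reindex)
  also have "\<dots> = (\<Sum>p\<le>n. \<Sum>q\<le>n. ?F p q)"
    by (rule sum_atMost_oe_swap_reindex[of "\<lambda>p. \<Sum>q\<le>n. ?F p q"])
  finally show ?thesis .
qed

lemma inversion_weight_oe_swap:
  assumes "inj_on \<sigma> {..n}"
  shows "inversion_weight n W (\<sigma> \<circ> oe_swap n r) =
    inversion_weight n W \<sigma> + (\<Sum>p\<in>swap_positions n r. oriented W (\<sigma> p) (\<sigma> (Suc p)))"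
proof -
  let ?t = "oe_swap n r"
  define I where "I p q = (if \<sigma> q < \<sigma> p then W (\<sigma> q) (\<sigma> p) else 0)" for p q
  define \<Delta> where "\<Delta> p = (if ?t p < p then I p (?t p) else if p < ?t p then - I p (?t p) else 0)" for p
  have "inversion_weight n W (\<sigma> \<circ> ?t) = (\<Sum>p\<le>n. \<Sum>q\<le>n. if ?t p < ?t q then I p q else 0)"
    unfolding inversion_weight_comp_oe_swap I_def by (intro sum.cong refl) simp
  also have "\<dots> = (\<Sum>p\<le>n. \<Sum>q\<le>n. (if p < q then I p q else 0) + (if q = ?t p then \<Delta> p else 0))"
  proof (intro sum.cong refl)
    fix p q assume "p \<in> {..n}" "q \<in> {..n}"
    then have "?t p < ?t q \<longleftrightarrow> (if q = ?t p \<and> q \<noteq> p then q < p else p < q)"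
      by (simp add: oe_swap_less_iff)
    then show "(if ?t p < ?t q then I p q else 0) = (if p < q then I p q else 0) + (if q = ?t p then \<Delta> p else 0)"
    proof (cases "q = ?t p")
      case True
      then show ?thesis using \<open>?t p < ?t q \<longleftrightarrow> _\<close> unfolding \<Delta>_def
        by (simp only: True[symmetric]) (cases "q < p"; cases "p < q"; simp)
    next
      case False
      then show ?thesis using \<open>?t p < ?t q \<longleftrightarrow> _\<close> by simp
    qed
  qed
  also have "\<dots> = inversion_weight n W \<sigma> + (\<Sum>p\<le>n. \<Delta> p)"
  proof -
    have "(\<Sum>p\<le>n. \<Sum>q\<le>n. if p < q then I p q else 0) = inversion_weight n W \<sigma>"
      unfolding inversion_weight_def I_def by (intro sum.cong refl) simp
    moreover have "(\<Sum>p\<le>n. \<Sum>q\<le>n. if q = ?t p then \<Delta> p else 0) = (\<Sum>p\<le>n. \<Delta> p)"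
      by (intro sum.cong refl) (simp add: sum.delta oe_swap_le)
    ultimately show ?thesis by (simp only: sum.distrib)
  qed
  also have "(\<Sum>p\<le>n. \<Delta> p) = (\<Sum>p\<in>swap_positions n r. \<Delta> p + \<Delta> (Suc p))"
    by (rule sum_atMost_swap_positions) (simp add: \<Delta>_def)
  also have "\<dots> = (\<Sum>p\<in>swap_positions n r. oriented W (\<sigma> p) (\<sigma> (Suc p)))"
  proof (rule sum.cong[OF refl])
    fix p assume p: "p \<in> swap_positions n r"
    then have "\<sigma> p \<noteq> \<sigma> (Suc p)"
      using inj_onD[OF assms, of p "Suc p"] by (auto simp: swap_positions_def)
    then show "\<Delta> p + \<Delta> (Suc p) = oriented W (\<sigma> p) (\<sigma> (Suc p))"
      using oe_swap_swap_position[OF p] by (auto simp: \<Delta>_def I_def oriented_def)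
  qed
  finally show ?thesis .
qed

lemma inversion_weight_cong:
  "(\<And>p. p \<le> n \<Longrightarrow> \<sigma> p = \<tau> p) \<Longrightarrow> inversion_weight n W \<sigma> = inversion_weight n W \<tau>"
  unfolding inversion_weight_def by (intro sum.cong refl) auto

lemma inversion_weight_id: "inversion_weight n W (\<lambda>p. p) = 0"
  unfolding inversion_weight_def by (auto intro!: sum.neutral)

lemma inversion_weight_reverse:
  "inversion_weight n W (\<lambda>p. n - p) = (\<Sum>b\<le>n. \<Sum>a<b. W a b)"
proof -
  have rev: "(\<Sum>p\<le>n. g (n - p)) = (\<Sum>p\<le>n. g p)" for g :: "nat \<Rightarrow> int"
    by (rule sum.reindex_bij_witness[where i="\<lambda>p. n - p" and j="\<lambda>p. n - p"]) auto
  have "inversion_weight n W (\<lambda>p. n - p) = (\<Sum>p\<le>n. \<Sum>q\<le>n. if p < q then W (n - q) (n - p) else 0)"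
    unfolding inversion_weight_def by (intro sum.cong refl) auto
  also have "\<dots> = (\<Sum>a\<le>n. \<Sum>b\<le>n. if b < a then W b a else 0)"
    by (subst (1 2) rev[symmetric]) (intro sum.cong refl, auto)
  also have "\<dots> = (\<Sum>a\<le>n. \<Sum>b<a. W b a)"
  proof (rule sum.cong[OF refl])
    fix a assume "a \<in> {..n}"
    then have "{b \<in> {..n}. b < a} = {..<a}" by auto
    then show "(\<Sum>b\<le>n. if b < a then W b a else 0) = (\<Sum>b<a. W b a)"
      by (simp add: sum.inter_filter[symmetric])
  qed
  finally show ?thesis .
qed

section \<open>Prefix parities and CZ phases\<close>

fun prefix_parity :: "(nat \<Rightarrow> bool) \<Rightarrow> nat \<Rightarrow> bool" where
  "prefix_parity x 0 = False"
| "prefix_parity x (Suc a) = (prefix_parity x a \<noteq> x a)"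

definition parity_diff :: "(nat \<Rightarrow> bool) \<Rightarrow> nat \<Rightarrow> nat \<Rightarrow> int" where
  "parity_diff x a b = of_bool (prefix_parity x a \<noteq> prefix_parity x b)"

(* With s = prefix_parity x, i.e. x(j) = s(j) xor s(j+1), one has modulo 4
   2 x(j) x(k) = [s(j) \<noteq> s(k)] - [s(j) \<noteq> s(k+1)] - [s(j+1) \<noteq> s(k)] + [s(j+1) \<noteq> s(k+1)]. *)
definition cz_coeff :: "nat \<Rightarrow> nat \<Rightarrow> nat \<Rightarrow> nat \<Rightarrow> int" where
  "cz_coeff j k a b = of_bool ((a, b) = (j, k)) - of_bool ((a, b) = (j, Suc k))
     - of_bool ((a, b) = (Suc j, k)) + of_bool ((a, b) = (Suc j, Suc k))"

definition cz_weight :: "(nat \<times> nat) list \<Rightarrow> nat \<Rightarrow> nat \<Rightarrow> int" where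
  "cz_weight ps a b = (\<Sum>(j, k)\<leftarrow>ps. cz_coeff (min j k) (max j k) a b)"

definition phase_weight :: "(nat \<times> nat) list \<Rightarrow> (nat \<Rightarrow> bool) \<Rightarrow> nat \<Rightarrow> nat \<Rightarrow> int" where
  "phase_weight ps x a b = cz_weight ps a b * parity_diff x a b"

lemma parity_diff_same [simp]: "parity_diff x a a = 0"
  by (simp add: parity_diff_def)

lemma ipow_parity_diff_cz:
  "ipow (parity_diff x j k - parity_diff x j (Suc k) - parity_diff x (Suc j) k
         + parity_diff x (Suc j) (Suc k)) = (if x j \<and> x k then -1 else 1)"
  by (cases "prefix_parity x j"; cases "prefix_parity x k"; cases "x j"; cases "x k")
    (simp_all add: parity_diff_def ipow_def)

lemma sum_pairs_indicator:
  fixes u v n :: nat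
  shows "(\<Sum>b\<le>n. \<Sum>a<b. if (a, b) = (u, v) then c else 0) = (if u < v \<and> v \<le> n then c else (0::int))"
proof -
  have inner: "(\<Sum>a<b. if (a, b) = (u, v) then c else 0) = (if b = v then if u < v then c else 0 else 0)"
    for b
  proof -
    have "(\<Sum>a<b. if (a, b) = (u, v) then c else 0) = (\<Sum>a<b. if a = u then if b = v then c else 0 else 0)"
      by (rule sum.cong) auto
    also have "\<dots> = (if u \<in> {..<b} then if b = v then c else 0 else 0)"
      by (rule sum.delta) simp
    finally show ?thesis by auto
  qed
  have "(\<Sum>b\<le>n. \<Sum>a<b. if (a, b) = (u, v) then c else 0) =
      (\<Sum>b\<le>n. if b = v then if u < v then c else 0 else 0)"
    by (simp only: inner)
  also have "\<dots> = (if v \<in> {..n} then if u < v then c else 0 else 0)"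
    by (rule sum.delta) simp
  finally show ?thesis by auto
qed

lemma pair_sum_cz_coeff:
  assumes "j < k" and "k < n"
  shows "(\<Sum>b\<le>n. \<Sum>a<b. cz_coeff j k a b * parity_diff x a b) =
    parity_diff x j k - parity_diff x j (Suc k) - parity_diff x (Suc j) k + parity_diff x (Suc j) (Suc k)"
proof -
  let ?pd = "parity_diff x"
  let ?\<delta> = "\<lambda>u v a b. if (a, b) = (u, v) then ?pd u v else 0"
  have "cz_coeff j k a b * ?pd a b =
      ?\<delta> j k a b - ?\<delta> j (Suc k) a b - ?\<delta> (Suc j) k a b + ?\<delta> (Suc j) (Suc k) a b" for a b
    by (auto simp: cz_coeff_def)
  then have "(\<Sum>b\<le>n. \<Sum>a<b. cz_coeff j k a b * ?pd a b) =
      (\<Sum>b\<le>n. \<Sum>a<b. ?\<delta> j k a b) - (\<Sum>b\<le>n. \<Sum>a<b. ?\<delta> j (Suc k) a b)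
      - (\<Sum>b\<le>n. \<Sum>a<b. ?\<delta> (Suc j) k a b) + (\<Sum>b\<le>n. \<Sum>a<b. ?\<delta> (Suc j) (Suc k) a b)"
    by (simp only: sum.distrib sum_subtractf)
  also have "\<dots> = ?pd j k - ?pd j (Suc k) - ?pd (Suc j) k + ?pd (Suc j) (Suc k)"
    unfolding sum_pairs_indicator using assms by (cases "Suc j = k") auto
  finally show ?thesis .
qed

lemma ipow_pair_sum_phase_weight:
  assumes "\<forall>(j, k)\<in>set ps. j < n \<and> k < n \<and> j \<noteq> k"
  shows "ipow (\<Sum>b\<le>n. \<Sum>a<b. phase_weight ps x a b) = cz_phase ps x"
  using assms
proof (induction ps)
  case Nil
  then show ?case by (simp add: phase_weight_def cz_weight_def)
next
  case (Cons e ps)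
  obtain j k where e: "e = (j, k)" by fastforce
  let ?lo = "min j k" and ?hi = "max j k"
  have lo_hi: "?lo < ?hi" "?hi < n" using Cons.prems e by auto
  have "(\<Sum>b\<le>n. \<Sum>a<b. phase_weight (e # ps) x a b) =
      (\<Sum>b\<le>n. \<Sum>a<b. cz_coeff ?lo ?hi a b * parity_diff x a b) + (\<Sum>b\<le>n. \<Sum>a<b. phase_weight ps x a b)"
    by (simp add: e phase_weight_def cz_weight_def algebra_simps sum.distrib)
  also have "\<dots> = (parity_diff x ?lo ?hi - parity_diff x ?lo (Suc ?hi) - parity_diff x (Suc ?lo) ?hi
                  + parity_diff x (Suc ?lo) (Suc ?hi)) + (\<Sum>b\<le>n. \<Sum>a<b. phase_weight ps x a b)"
    by (simp only: pair_sum_cz_coeff[OF lo_hi])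
  finally have "ipow (\<Sum>b\<le>n. \<Sum>a<b. phase_weight (e # ps) x a b) =
      (if x ?lo \<and> x ?hi then -1 else 1) * cz_phase ps x"
    using Cons by (simp only: ipow_add[where b = "\<Sum>b\<le>n. \<Sum>a<b. phase_weight ps x a b"] ipow_parity_diff_cz)
      simp
  moreover have "(x ?lo \<and> x ?hi) = (x j \<and> x k)" by (auto simp: min_def max_def)
  ultimately show ?case by (simp add: e mult.commute)
qed

section \<open>The circuit\<close>

definition round_state :: "nat \<Rightarrow> nat \<Rightarrow> (nat \<Rightarrow> bool) \<Rightarrow> (nat \<Rightarrow> bool)" where
  "round_state n r x =
    (\<lambda>i. i < n \<and> prefix_parity x (oe_perm n r i) \<noteq> prefix_parity x (oe_perm n r (Suc i)))"

definition controls :: "nat \<Rightarrow> nat \<Rightarrow> nat list" where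
  "controls n r = filter (\<lambda>p. odd (p + r)) [0..<n]"

definition phase_gates :: "nat \<Rightarrow> (nat \<times> nat) list \<Rightarrow> nat \<Rightarrow> gate list" where
  "phase_gates n ps r = concat (map (\<lambda>p.
     replicate (nat (oriented (cz_weight ps) (oe_perm n r p) (oe_perm n r (Suc p)) mod 4)) (Pg p))
     (controls n r))"

(* Swapping wires p and p + 1 adds qubit p to its two neighbours. The CNOTs targeting p + 1 and
   those targeting p - 1 form two layers, since the controls p and p + 2 share the target p + 1. *)
definition up_cnots :: "nat \<Rightarrow> nat \<Rightarrow> gate list" where
  "up_cnots n r = map (\<lambda>p. CNOT p (Suc p)) (filter (\<lambda>p. Suc p < n) (controls n r))"

definition down_cnots :: "nat \<Rightarrow> nat \<Rightarrow> gate list" where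
  "down_cnots n r = map (\<lambda>p. CNOT p (p - 1)) (filter (\<lambda>p. 0 < p) (controls n r))"

definition round_gates :: "nat \<Rightarrow> (nat \<times> nat) list \<Rightarrow> nat \<Rightarrow> gate list" where
  "round_gates n ps r = phase_gates n ps r @ up_cnots n r @ down_cnots n r"

lemma set_controls: "set (controls n r) = swap_positions n r"
  unfolding controls_def swap_positions_def by auto

lemma distinct_controls: "distinct (controls n r)"
  unfolding controls_def by simp

lemma circ_run_replicate_Pg: "circ_run (replicate m (Pg p)) y = y"
  by (induction m) auto

lemma circ_run_Pg_replicates: "circ_run (concat (map (\<lambda>p. replicate (k p) (Pg p)) cs)) y = y"
  by (induction cs) (auto simp: circ_run_replicate_Pg)

lemma circ_phase_Pg_replicates:
  "circ_phase (concat (map (\<lambda>p. replicate (k p) (Pg p)) cs)) y = (\<Prod>p\<leftarrow>cs. (if y p then \<i> else 1) ^ k p)"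
proof -
  have "circ_phase (replicate m (Pg p)) y = (if y p then \<i> else 1) ^ m" for m p
    by (induction m) auto
  then show ?thesis by (induction cs) (auto simp: circ_run_replicate_Pg)
qed

lemma circ_phase_cnots: "circ_phase (map (\<lambda>p. CNOT p (t p)) cs) y = 1"
  by (induction cs arbitrary: y) auto

lemma circ_run_cnots_untouched:
  "i \<notin> t ` set cs \<Longrightarrow> circ_run (map (\<lambda>p. CNOT p (t p)) cs) y i = y i"
  by (induction cs arbitrary: y) auto

lemma circ_run_cnots_target:
  assumes "distinct (map t cs)" and "\<forall>p\<in>set cs. t p \<notin> set cs" and "p \<in> set cs"
  shows "circ_run (map (\<lambda>p. CNOT p (t p)) cs) y (t p) = (y (t p) \<noteq> y p)"
  using assms
proof (induction cs arbitrary: y)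
  case Nil
  then show ?case by simp
next
  case (Cons c cs)
  let ?y = "y(t c := (y (t c) \<noteq> y c))"
  have "t c \<notin> t ` set cs" using Cons.prems(1) by simp
  show ?case
  proof (cases "p = c")
    case True
    then show ?thesis using circ_run_cnots_untouched[OF \<open>t c \<notin> t ` set cs\<close>, of ?y] by simp
  next
    case False
    then have p: "p \<in> set cs" using Cons.prems by simp
    have "t p \<noteq> t c" using p \<open>t c \<notin> t ` set cs\<close> by (metis image_eqI)
    moreover have "p \<noteq> t c" using Cons.prems(2) p by auto
    moreover have "circ_run (map (\<lambda>p. CNOT p (t p)) cs) ?y (t p) = (?y (t p) \<noteq> ?y p)"
      by (rule Cons.IH) (use Cons.prems p in auto)
    ultimately show ?thesis by simp
  qed
qed

lemma circ_run_up_cnots: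
  "circ_run (up_cnots n r) y j = (if 0 < j \<and> j < n \<and> even (j + r) then y j \<noteq> y (j - 1) else y j)"
proof -
  let ?cs = "filter (\<lambda>p. Suc p < n) (controls n r)"
  show ?thesis
  proof (cases "0 < j \<and> j < n \<and> even (j + r)")
    case True
    then have "j - 1 \<in> set ?cs" "Suc (j - 1) = j" by (auto simp: controls_def)
    moreover have "distinct (map Suc ?cs)" "\<forall>p\<in>set ?cs. Suc p \<notin> set ?cs"
      using distinct_controls by (auto simp: distinct_map controls_def)
    ultimately show ?thesis
      using True circ_run_cnots_target[of Suc ?cs "j - 1" y] by (simp add: up_cnots_def)
  next
    case False
    then have "j \<notin> Suc ` set ?cs" by (auto simp: controls_def)
    then have "circ_run (up_cnots n r) y j = y j"
      unfolding up_cnots_def by (rule circ_run_cnots_untouched)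
    then show ?thesis by (subst if_not_P[OF False])
  qed
qed

lemma circ_run_down_cnots:
  "circ_run (down_cnots n r) y j = (if Suc j < n \<and> even (j + r) then y j \<noteq> y (Suc j) else y j)"
proof -
  let ?cs = "filter (\<lambda>p. 0 < p) (controls n r)"
  show ?thesis
  proof (cases "Suc j < n \<and> even (j + r)")
    case True
    then have "Suc j \<in> set ?cs" by (auto simp: controls_def)
    moreover have "distinct (map (\<lambda>p. p - 1) ?cs)"
      using distinct_controls by (auto simp: distinct_map inj_on_def controls_def)
    moreover have "\<forall>p\<in>set ?cs. p - 1 \<notin> set ?cs"
      by (auto simp: controls_def)
    ultimately show ?thesis
      using True circ_run_cnots_target[of "\<lambda>p. p - 1" ?cs "Suc j" y] by (simp add: down_cnots_def)
  next
    case False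
    then have "j \<notin> (\<lambda>p. p - 1) ` set ?cs" by (auto simp: controls_def)
    then have "circ_run (down_cnots n r) y j = y j"
      unfolding down_cnots_def by (rule circ_run_cnots_untouched)
    then show ?thesis by (subst if_not_P[OF False])
  qed
qed

lemma circ_run_round_gates:
  "circ_run (round_gates n ps r) (round_state n r x) = round_state n (Suc r) x"
proof
  fix i
  let ?s = "\<lambda>j. prefix_parity x (oe_perm n r j)"
  let ?y = "round_state n r x"
  have y: "?y j = (j < n \<and> ?s j \<noteq> ?s (Suc j))" for j
    by (simp add: round_state_def)
  have goal: "round_state n (Suc r) x i = (i < n \<and> ?s (oe_swap n r i) \<noteq> ?s (oe_swap n r (Suc i)))"
    by (simp add: round_state_def)
  have run: "circ_run (round_gates n ps r) ?y i =
      (if Suc i < n \<and> even (i + r)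
       then circ_run (up_cnots n r) ?y i \<noteq> circ_run (up_cnots n r) ?y (Suc i)
       else circ_run (up_cnots n r) ?y i)"
    by (simp add: round_gates_def circ_run_Pg_replicates phase_gates_def circ_run_down_cnots)
  consider "n \<le> i" | "i < n" "odd (i + r)" | "i < n" "even (i + r)" by linarith
  then show "circ_run (round_gates n ps r) ?y i = round_state n (Suc r) x i"
  proof cases
    case 1
    then show ?thesis unfolding run goal by (simp add: circ_run_up_cnots y)
  next
    case 2
    then have "oe_swap n r i = Suc i" "oe_swap n r (Suc i) = i" by (auto simp: oe_swap_def)
    then show ?thesis using 2 unfolding run goal by (auto simp: circ_run_up_cnots y)
  next
    case 3
    then have "oe_swap n r i = (if 0 < i then i - 1 else i)"
      "oe_swap n r (Suc i) = (if Suc i < n then Suc (Suc i) else Suc i)"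
      by (auto simp: oe_swap_def)
    then show ?thesis using 3 unfolding run goal
      by (cases "0 < i"; cases "Suc i < n") (auto simp: circ_run_up_cnots y)
  qed
qed

lemma oriented_phase_weight:
  "oriented (phase_weight ps x) a b = oriented (cz_weight ps) a b * parity_diff x a b"
  by (auto simp: oriented_def phase_weight_def parity_diff_def)

lemma circ_phase_round_gates:
  "circ_phase (round_gates n ps r) (round_state n r x) =
    ipow (\<Sum>p\<in>swap_positions n r. oriented (phase_weight ps x) (oe_perm n r p) (oe_perm n r (Suc p)))"
proof -
  let ?y = "round_state n r x"
  let ?K = "\<lambda>p. oriented (cz_weight ps) (oe_perm n r p) (oe_perm n r (Suc p))"
  have "circ_phase (round_gates n ps r) ?y = circ_phase (phase_gates n ps r) ?y"
    by (simp add: round_gates_def up_cnots_def down_cnots_def circ_phase_cnots)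
  also have "\<dots> = (\<Prod>p\<leftarrow>controls n r. ipow (?K p * of_bool (?y p)))"
    by (simp add: phase_gates_def circ_phase_Pg_replicates power_if_i_eq_ipow)
  also have "\<dots> = ipow (\<Sum>p\<in>swap_positions n r. ?K p * of_bool (?y p))"
    by (simp add: prod_list_ipow sum_list_distinct_conv_sum_set distinct_controls set_controls)
  also have "(\<Sum>p\<in>swap_positions n r. ?K p * of_bool (?y p)) =
      (\<Sum>p\<in>swap_positions n r. oriented (phase_weight ps x) (oe_perm n r p) (oe_perm n r (Suc p)))"
    by (intro sum.cong refl)
      (simp add: oriented_phase_weight round_state_def parity_diff_def swap_positions_def)
  finally show ?thesis .
qed

lemma round_state_0: "x \<in> basis n \<Longrightarrow> round_state n 0 x = x"
  by (auto simp: round_state_def basis_def not_le[symmetric])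

lemma round_state_reverses: "round_state n (Suc n) x = rev_bits n x"
proof
  fix i
  show "round_state n (Suc n) x i = rev_bits n x i"
  proof (cases "i < n")
    case True
    then have "oe_perm n (Suc n) i = Suc (n - Suc i)" "oe_perm n (Suc n) (Suc i) = n - Suc i"
      by (simp_all add: oe_perm_reverses del: oe_perm.simps)
    then show ?thesis using True by (auto simp: round_state_def rev_bits_def)
  next
    case False
    then show ?thesis by (simp add: round_state_def rev_bits_def)
  qed
qed

lemma circ_run_phase_rounds:
  assumes "x \<in> basis n"
  shows "circ_run (concat (map (round_gates n ps) [0..<k])) x = round_state n k x \<and>
    circ_phase (concat (map (round_gates n ps) [0..<k])) x =
      ipow (inversion_weight n (phase_weight ps x) (oe_perm n k))"
proof (induction k)
  case 0
  have "oe_perm n 0 = (\<lambda>p. p)" by auto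
  then show ?case using assms by (simp add: round_state_0 inversion_weight_id)
next
  case (Suc k)
  have "inj_on (oe_perm n k) {..n}" using bij_betw_oe_perm bij_betw_def by blast
  then have "inversion_weight n (phase_weight ps x) (oe_perm n (Suc k)) =
      inversion_weight n (phase_weight ps x) (oe_perm n k) +
      (\<Sum>p\<in>swap_positions n k. oriented (phase_weight ps x) (oe_perm n k p) (oe_perm n k (Suc p)))"
    unfolding oe_perm_Suc by (rule inversion_weight_oe_swap)
  then show ?case
    using Suc by (simp add: circ_run_round_gates circ_phase_round_gates ipow_add del: oe_perm.simps)
qed

lemma circ_run_phase_circuit:
  assumes "\<forall>(j, k)\<in>set ps. j < n \<and> k < n \<and> j \<noteq> k" and "x \<in> basis n"
  shows "circ_run (concat (map (round_gates n ps) [0..<Suc n])) x = rev_bits n x"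
    and "circ_phase (concat (map (round_gates n ps) [0..<Suc n])) x = cz_phase ps x"
proof -
  have "inversion_weight n (phase_weight ps x) (oe_perm n (Suc n)) =
      inversion_weight n (phase_weight ps x) (\<lambda>p. n - p)"
    by (rule inversion_weight_cong) (simp add: oe_perm_reverses del: oe_perm.simps)
  then show "circ_phase (concat (map (round_gates n ps) [0..<Suc n])) x = cz_phase ps x"
    using circ_run_phase_rounds[OF assms(2), of ps "Suc n"]
    by (simp add: inversion_weight_reverse ipow_pair_sum_phase_weight[OF assms(1)] del: oe_perm.simps)
  show "circ_run (concat (map (round_gates n ps) [0..<Suc n])) x = rev_bits n x"
    using circ_run_phase_rounds[OF assms(2), of ps "Suc n"] round_state_reverses by simp
qed

lemma cnot_layer_parallel_cnots:
  assumes "\<forall>g\<in>set pre. \<not> is_cnot g" and "distinct cs"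
    and "\<forall>p\<in>set cs. \<forall>q\<in>set cs. p \<noteq> q \<longrightarrow> {p, t p} \<inter> {q, t q} = {}"
  shows "cnot_layer (pre @ map (\<lambda>p. CNOT p (t p)) cs)"
  unfolding cnot_layer_def
proof (intro allI impI)
  fix i j
  let ?gs = "pre @ map (\<lambda>p. CNOT p (t p)) cs"
  assume i: "i < length ?gs" and j: "j < length ?gs" and "i \<noteq> j"
    and "is_cnot (?gs ! i)" and "is_cnot (?gs ! j)"
  then have "\<not> i < length pre" "\<not> j < length pre"
    using assms(1) by (auto simp: nth_append dest: nth_mem)
  then have "?gs ! i = CNOT (cs ! (i - length pre)) (t (cs ! (i - length pre)))"
    "?gs ! j = CNOT (cs ! (j - length pre)) (t (cs ! (j - length pre)))"
    "cs ! (i - length pre) \<noteq> cs ! (j - length pre)"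
    using i j \<open>i \<noteq> j\<close> assms(2) by (auto simp: nth_append nth_eq_iff_index_eq)
  then show "gate_qubits (?gs ! i) \<inter> gate_qubits (?gs ! j) = {}"
    using assms(3) i j \<open>\<not> i < length pre\<close> \<open>\<not> j < length pre\<close> by (simp add: nth_append)
qed

definition circuit_layers :: "nat \<Rightarrow> (nat \<times> nat) list \<Rightarrow> gate list list" where
  "circuit_layers n ps = concat (map (\<lambda>r. [phase_gates n ps r @ up_cnots n r, down_cnots n r]) [0..<Suc n])"

lemma concat_circuit_layers: "concat (circuit_layers n ps) = concat (map (round_gates n ps) [0..<Suc n])"
proof -
  have "concat (concat (map (\<lambda>r. [a r, b r]) rs)) = concat (map (\<lambda>r. a r @ b r) rs)"
    for a b :: "nat \<Rightarrow> gate list" and rs by (induction rs) auto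
  then show ?thesis by (simp add: circuit_layers_def round_gates_def[abs_def])
qed

lemma lnn_circuit_depth_circuit_layers: "lnn_circuit_depth_le n (2 * n + 2) (circuit_layers n ps)"
proof -
  have "length (concat (map (\<lambda>r. [a r, b r]) rs)) = 2 * length rs" for a b :: "nat \<Rightarrow> gate list" and rs
    by (induction rs) auto
  then have "length (circuit_layers n ps) = 2 * n + 2" by (simp add: circuit_layers_def)
  moreover have "cnot_layer (phase_gates n ps r @ up_cnots n r)" for r
    unfolding up_cnots_def
    by (rule cnot_layer_parallel_cnots) (auto simp: phase_gates_def distinct_controls controls_def)
  moreover have "cnot_layer (down_cnots n r)" for r
  proof -
    have "cnot_layer ([] @ map (\<lambda>p. CNOT p (p - 1)) (filter (\<lambda>p. 0 < p) (controls n r)))"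
    proof (rule cnot_layer_parallel_cnots)
      show "\<forall>p\<in>set (filter (\<lambda>p. 0 < p) (controls n r)). \<forall>q\<in>set (filter (\<lambda>p. 0 < p) (controls n r)).
          p \<noteq> q \<longrightarrow> {p, p - 1} \<inter> {q, q - 1} = {}"
        by (auto simp: controls_def; presburger)
    qed (simp_all add: distinct_controls)
    then show ?thesis by (simp add: down_cnots_def)
  qed
  moreover have "lnn_gate n g" if "l \<in> set (circuit_layers n ps)" "g \<in> set l" for l g
    using that by (auto simp: circuit_layers_def phase_gates_def up_cnots_def down_cnots_def controls_def)
  ultimately show ?thesis by (auto simp: lnn_circuit_depth_le_def circuit_layers_def)
qed

(* The construction works for every n. *)
theorem theorem2:
  fixes n :: nat and ps :: "(nat \<times> nat) list"
  assumes "n \<ge> 2"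
    and "\<forall>(j, k)\<in>set ps. j < n \<and> k < n \<and> j \<noteq> k"
  shows "\<exists>L. lnn_circuit_depth_le n (2 * n + 2) L \<and>
           (\<forall>y\<in>basis n. \<forall>x\<in>basis n.
              circ_mat n (concat L) y x = qmult n (rev_mat n) (cz_layer_mat n ps) y x)"
proof (intro exI conjI ballI)
  show "lnn_circuit_depth_le n (2 * n + 2) (circuit_layers n ps)"
    by (rule lnn_circuit_depth_circuit_layers)
  fix y x assume x: "x \<in> basis n"
  have gates: "\<forall>g\<in>set (concat (circuit_layers n ps)). lnn_gate n g"
    using lnn_circuit_depth_circuit_layers[of n ps] by (auto simp: lnn_circuit_depth_le_def)
  have "circ_run (concat (circuit_layers n ps)) x = rev_bits n x"
    "circ_phase (concat (circuit_layers n ps)) x = cz_phase ps x"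
    unfolding concat_circuit_layers using circ_run_phase_circuit[OF assms(2) x] by simp_all
  then show "circ_mat n (concat (circuit_layers n ps)) y x = qmult n (rev_mat n) (cz_layer_mat n ps) y x"
    by (simp add: circ_mat_eq_monomial[OF gates x] rev_cz_layer_mat_eq_monomial[OF x])
qed

end
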